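(* Let $p$ be an odd prime, $\mathbb{F}$ a field of characteristic $p$, and $a,n$ natural numbers with $a<p\leq n$. Let $\ell$ be a natural number with $\ell p\leq an$. If $\ell=as$ for some natural number $s$, then $$H^{(a^n)}(R_{as})\cong H^{(a^{sp})}(R_{as})\boxtimes H^{(a^{n-sp})}$$ as $\mathbb{F}N_{S_{an}}(R_{as})$-modules, where $N_{S_{an}}(R_{as})= N_{S_{asp}}(R_{as})\times S_{a(n-sp)}$ with $S_{asp}$ acting on $\{1,\ldots,asp\}$ and $S_{a(n-sp)}$ acting on $\{asp+1,\ldots,an\}$ (the second factor module being identified with the Foulkes module on the set $\{asp+1,\ldots,an\}$). If $\ell$ is not an integer multiple of $a$, then $H^{(a^n)}(R_\ell)=0$.
   Context: For natural numbers $a,m$, $H^{(a^m)}$ is the $\mathbb{F}S_{am}$-permutation module with basis the set of set partitions of $\{1,\ldots,am\}$ into $m$ sets of size $a$, with the natural action. For $j\geq1$ let $z_j$ be the $p$-cycle $(p(j-1)+1,p(j-1)+2,\ldots,pj)$, and let $R_\ell$ be the cyclic subgroup of order $p$ generated by $z_1z_2\cdots z_\ell$. For an $\mathbb{F}G$-module $V$ and a $p$-subgroup $Q\leq G$, the Brauer quotient is $V(Q)=V^Q/\sum_{P<Q}\mathrm{Tr}_P^Q(V^P)$, where $V^P$ is the space of $P$-fixed vectors and $\mathrm{Tr}_P^Q(v)=\sum_{g}vg$ over right coset representatives $g$ of $P$ in $Q$; it is an $\mathbb{F}N_G(Q)$-module (on which $Q$ acts trivially). *)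

theory Defs
  imports "HOL-Algebra.Sym_Groups" "HOL-Combinatorics.Cycles" "HOL-Library.Disjoint_Sets" "HOL-Computational_Algebra.Primes"
begin

record ('v, 'a) fmod =
  mcar :: "'v set"
  mzero :: 'v
  madd :: "'v \<Rightarrow> 'v \<Rightarrow> 'v"
  msmult :: "'a \<Rightarrow> 'v \<Rightarrow> 'v"
  mact :: "(nat \<Rightarrow> nat) \<Rightarrow> 'v \<Rightarrow> 'v"

definition mod_iso :: "(nat \<Rightarrow> nat) set \<Rightarrow> ('v, 'a) fmod \<Rightarrow> ('w, 'a) fmod \<Rightarrow> bool" where
  "mod_iso G M M' \<longleftrightarrow> (\<exists>\<phi>. bij_betw \<phi> (mcar M) (mcar M')
      \<and> (\<forall>x\<in>mcar M. \<forall>y\<in>mcar M. \<phi> (madd M x y) = madd M' (\<phi> x) (\<phi> y))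
      \<and> (\<forall>c. \<forall>x\<in>mcar M. \<phi> (msmult M c x) = msmult M' c (\<phi> x))
      \<and> (\<forall>g\<in>G. \<forall>x\<in>mcar M. \<phi> (mact M g x) = mact M' g (\<phi> x)))"

definition zero_module :: "('v, 'a) fmod \<Rightarrow> bool" where
  "zero_module M \<longleftrightarrow> mcar M = {mzero M}"

definition sub_mod :: "('v, 'a) fmod \<Rightarrow> 'v set \<Rightarrow> ('v, 'a) fmod" where
  "sub_mod M S = M\<lparr>mcar := S\<rparr>"

definition mcoset :: "('v, 'a) fmod \<Rightarrow> 'v set \<Rightarrow> 'v \<Rightarrow> 'v set" where
  "mcoset M K v = (\<lambda>k. madd M v k) ` K"

definition quot_mod :: "('v, 'a) fmod \<Rightarrow> 'v set \<Rightarrow> ('v set, 'a) fmod" where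
  "quot_mod M K = \<lparr> mcar = mcoset M K ` mcar M,
     mzero = mcoset M K (mzero M),
     madd = (\<lambda>C D. mcoset M K (madd M (SOME v. v \<in> C) (SOME w. w \<in> D))),
     msmult = (\<lambda>c C. mcoset M K (msmult M c (SOME v. v \<in> C))),
     mact = (\<lambda>g C. mcoset M K (mact M g (SOME v. v \<in> C))) \<rparr>"

definition foulkes_basis :: "nat set \<Rightarrow> nat \<Rightarrow> nat set set set" where
  "foulkes_basis A a = {P. partition_on A P \<and> (\<forall>X\<in>P. card X = a)}"

definition pimg :: "(nat \<Rightarrow> nat) \<Rightarrow> nat set set \<Rightarrow> nat set set" where
  "pimg g P = (\<lambda>X. g ` X) ` P"

text \<open>The permutation module with basis foulkes_basis A a, elements = coefficient
  functions vanishing outside the basis; g sends basis element P to pimg g P.\<close>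
definition foulkes :: "nat set \<Rightarrow> nat \<Rightarrow> (nat set set \<Rightarrow> 'a::field, 'a) fmod" where
  "foulkes A a = \<lparr> mcar = {v. \<forall>P. P \<notin> foulkes_basis A a \<longrightarrow> v P = 0},
     mzero = (\<lambda>P. 0),
     madd = (\<lambda>v w P. v P + w P),
     msmult = (\<lambda>c v P. c * v P),
     mact = (\<lambda>g v P. v (pimg (inv_into UNIV g) P)) \<rparr>"

abbreviation H :: "nat \<Rightarrow> nat \<Rightarrow> (nat set set \<Rightarrow> 'a::field, 'a) fmod" where
  "H a m \<equiv> foulkes {1..a*m} a"

definition fixed_pts :: "('v, 'a) fmod \<Rightarrow> (nat \<Rightarrow> nat) set \<Rightarrow> 'v set" where
  "fixed_pts V P = {v \<in> mcar V. \<forall>g\<in>P. mact V g v = v}"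

text \<open>Cosets of P in Q (the cosets Pg in the right-action convention of the paper, i.e.
  the sets {g o h | h in P} for function composition).\<close>
definition pcosets :: "(nat \<Rightarrow> nat) set \<Rightarrow> (nat \<Rightarrow> nat) set \<Rightarrow> (nat \<Rightarrow> nat) set set" where
  "pcosets P Q = {(\<lambda>h. g \<circ> h) ` P | g. g \<in> Q}"

definition rtrace :: "('b \<Rightarrow> 'a::field, 'a) fmod \<Rightarrow> (nat \<Rightarrow> nat) set \<Rightarrow> (nat \<Rightarrow> nat) set
    \<Rightarrow> ('b \<Rightarrow> 'a) \<Rightarrow> ('b \<Rightarrow> 'a)" where
  "rtrace V P Q v = (\<lambda>x. \<Sum>C\<in>pcosets P Q. mact V (SOME g. g \<in> C) v x)"

text \<open>The sum over proper subgroups P < Q (of the symmetric group S_N) of Tr_P^Q(V^P).\<close>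
definition brauer_ker :: "nat \<Rightarrow> ('b \<Rightarrow> 'a::field, 'a) fmod \<Rightarrow> (nat \<Rightarrow> nat) set \<Rightarrow> ('b \<Rightarrow> 'a) set" where
  "brauer_ker N V Q = {v. \<exists>(k::nat) f. (\<forall>i<k. f i \<in> {rtrace V P Q w | P w.
        subgroup P (sym_group N) \<and> P \<subset> Q \<and> w \<in> fixed_pts V P})
      \<and> v = (\<lambda>x. \<Sum>i<k. f i x)}"

definition brauer_quot :: "nat \<Rightarrow> ('b \<Rightarrow> 'a::field, 'a) fmod \<Rightarrow> (nat \<Rightarrow> nat) set
    \<Rightarrow> (('b \<Rightarrow> 'a) set, 'a) fmod" where
  "brauer_quot N V Q = quot_mod (sub_mod V (fixed_pts V Q)) (brauer_ker N V Q)"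

text \<open>M \<boxtimes> H(A2,b), realised as functions from the basis of H(A2,b) to M
  (identifying m \<otimes> P with the function supported at P with value m).
  A permutation g acts on M (via its restriction) and on the basis of H(A2,b).\<close>
definition tensor_foulkes :: "('v, 'a) fmod \<Rightarrow> nat set \<Rightarrow> nat \<Rightarrow> (nat set set \<Rightarrow> 'v, 'a) fmod" where
  "tensor_foulkes M A2 b = (let B = foulkes_basis A2 b in
   \<lparr> mcar = {f. \<forall>P. (P \<in> B \<longrightarrow> f P \<in> mcar M) \<and> (P \<notin> B \<longrightarrow> f P = mzero M)},
     mzero = (\<lambda>P. mzero M),
     madd = (\<lambda>f f' P. if P \<in> B then madd M (f P) (f' P) else mzero M),
     msmult = (\<lambda>c f P. if P \<in> B then msmult M c (f P) else mzero M),
     mact = (\<lambda>g f P. if P \<in> B then mact M g (f (pimg (inv_into UNIV g) P)) else mzero M) \<rparr>)"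

definition zcyc :: "nat \<Rightarrow> nat \<Rightarrow> nat \<Rightarrow> nat" where
  "zcyc p j = cycle_of_list [p*(j-1)+1 ..< p*j+1]"

definition zprod :: "nat \<Rightarrow> nat \<Rightarrow> nat \<Rightarrow> nat" where
  "zprod p l = foldr (\<circ>) (map (zcyc p) [1..<l+1]) id"

definition Rgrp :: "nat \<Rightarrow> nat \<Rightarrow> (nat \<Rightarrow> nat) set" where
  "Rgrp p l = range (\<lambda>k. zprod p l ^^ k)"

definition normalizer_S :: "nat \<Rightarrow> (nat \<Rightarrow> nat) set \<Rightarrow> (nat \<Rightarrow> nat) set" where
  "normalizer_S N Q = {g. g permutes {1..N} \<and> (\<lambda>h. g \<circ> h \<circ> inv_into UNIV g) ` Q = Q}"

end

theory Submission
  imports Defs "HOL-Number_Theory.Cong"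
begin

text \<open>\<open>R = \<langle>z\<^sub>1\<cdots>z\<^sub>l\<rangle>\<close> has prime order \<open>p\<close>, so its only proper subgroup is trivial and the Brauer
  quotient of the permutation module \<open>H\<close> at \<open>R\<close> is the space of \<open>R\<close>-fixed vectors modulo the
  traces of vectors from the trivial subgroup: these are exactly the fixed vectors vanishing on the
  \<open>R\<close>-fixed set partitions (an \<open>R\<close>-fixed partition is counted \<open>p = 0\<close> times by the trace).
  As \<open>z\<^sub>1\<cdots>z\<^sub>l\<close> moves every point of its support \<open>{1..lp}\<close> in orbits of size \<open>p > a\<close>,
  no block of an \<open>R\<close>-fixed partition meets both the support and its complement. So the fixed
  partitions are the \<open>P \<union> Q\<close> with \<open>P\<close> an \<open>R\<close>-fixed partition of the support and \<open>Q\<close> any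
  partition of the complement. If there is any, \<open>a\<close> divides \<open>lp\<close>, hence \<open>l\<close>; so \<open>H(R) = 0\<close>
  unless \<open>a\<close> divides \<open>l\<close>. In general \<open>v \<mapsto> (Q \<mapsto> [P \<mapsto> v (P \<union> Q)])\<close> is an isomorphism onto
  the tensor product; it is equivariant for the normaliser, which preserves the support and
  hence splits as the normaliser in \<open>S\<^sub>l\<^sub>p\<close> times the symmetric group of the complement.\<close>

section \<open>The cyclic group \<open>R\<^sub>l\<close>\<close>

lemma foldr_comp_eq_comp: "foldr (\<circ>) fs g = foldr (\<circ>) fs id \<circ> g"
  by (induct fs) auto

lemma zprod_0: "zprod p 0 = id"
  by (simp add: zprod_def)

lemma zprod_Suc: "zprod p (Suc l) = zprod p l \<circ> zcyc p (Suc l)"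
  unfolding zprod_def by (simp add: foldr_comp_eq_comp[of _ "zcyc p (Suc l)"])

lemma zcyc_apply:
  assumes "p > 0" "j \<ge> 1"
  shows "zcyc p j x =
    (if p*(j-1) < x \<and> x \<le> p*j then p*(j-1) + ((x - 1) mod p + 1) mod p + 1 else x)"
proof -
  define m where "m = p*(j-1) + 1"
  define cs where "cs = [m..<m+p]"
  have pj: "p*j = p*(j-1) + p" using assms by (cases j) auto
  have zcyc_cs: "zcyc p j = cycle_of_list cs" unfolding zcyc_def cs_def m_def pj by simp
  show ?thesis
  proof (cases "p*(j-1) < x \<and> x \<le> p*j")
    case True
    define i where "i = x - m"
    have i: "i < p" "x = m + i" using True pj unfolding i_def m_def by auto
    have "map (cycle_of_list cs) cs = rotate1 cs"
      using cyclic_rotation[of cs 1] unfolding cs_def by simp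
    hence "cycle_of_list cs (cs ! i) = rotate1 cs ! i"
      by (metis i(1) length_upt add_diff_cancel_left' cs_def nth_map)
    also have "\<dots> = cs ! (Suc i mod p)" using i by (simp add: nth_rotate1 cs_def)
    finally have "zcyc p j x = m + Suc i mod p"
      using i assms unfolding zcyc_cs by (simp add: cs_def)
    moreover have "(x - 1) mod p = i" using i unfolding m_def by (simp add: mult.commute)
    ultimately show ?thesis using True by (simp add: m_def)
  next
    case False
    hence "x \<notin> set cs" unfolding cs_def m_def using pj by auto
    thus ?thesis using False id_outside_supp unfolding zcyc_cs by metis
  qed
qed

lemma zprod_apply:
  assumes "p > 0"
  shows "zprod p l x =
    (if 1 \<le> x \<and> x \<le> l*p then p*((x-1) div p) + ((x-1) mod p + 1) mod p + 1 else x)"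
proof (induct l arbitrary: x)
  case 0 thus ?case by (simp add: zprod_0)
next
  case (Suc l)
  show ?case
  proof (cases "l*p < x \<and> x \<le> Suc l * p")
    case True
    define i where "i = x - 1 - l*p"
    have i: "i < p" "x - 1 = l*p + i" using True unfolding i_def by auto
    have xm: "(x-1) div p = l" "(x-1) mod p = i" using i assms by simp_all
    have zc: "zcyc p (Suc l) x = p*l + (i+1) mod p + 1"
      using zcyc_apply[OF assms, of "Suc l" x] True xm by (simp add: mult.commute)
    have "(i+1) mod p < p" using assms by simp
    hence "zprod p l (p*l + (i+1) mod p + 1) = p*l + (i+1) mod p + 1"
      using Suc by (simp add: mult.commute)
    thus ?thesis using zc True xm by (auto simp: zprod_Suc mult.commute)
  next
    case False
    hence "zcyc p (Suc l) x = x"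
      using zcyc_apply[OF assms, of "Suc l" x] by (auto simp: mult.commute)
    thus ?thesis using False Suc by (auto simp: zprod_Suc)
  qed
qed

lemma zprod_funpow:
  assumes "p > 0"
  shows "(zprod p l ^^ k) x =
    (if 1 \<le> x \<and> x \<le> l*p then p*((x-1) div p) + ((x-1) mod p + k) mod p + 1 else x)"
proof (induct k)
  case 0
  have "x - 1 = p*((x-1) div p) + (x-1) mod p" by simp
  thus ?case by auto
next
  case (Suc k)
  show ?case
  proof (cases "1 \<le> x \<and> x \<le> l*p")
    case True
    define q where "q = (x-1) div p"
    define r where "r = ((x-1) mod p + k) mod p"
    have "q < l" using True assms unfolding q_def
      by (metis Suc_le_eq diff_less div_less_iff_less_mult less_le_trans zero_less_one)
    hence "p*q + p \<le> l*p" using mult_le_mono1[of "Suc q" l p] by (simp add: mult.commute)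
    moreover have r: "r < p" using assms unfolding r_def by simp
    ultimately have range: "1 \<le> p*q + r + 1 \<and> p*q + r + 1 \<le> l*p" by linarith
    have "(zprod p l ^^ Suc k) x = zprod p l (p*q + r + 1)"
      using Suc True by (simp add: q_def r_def)
    also have "\<dots> = p*q + (r + 1) mod p + 1"
      using range r zprod_apply[OF assms, of l "p*q + r + 1"] by simp
    also have "(r + 1) mod p = ((x-1) mod p + Suc k) mod p"
      unfolding r_def by (simp add: mod_Suc_eq)
    finally show ?thesis using True by (simp add: q_def)
  next
    case False
    hence "(zprod p l ^^ k) x = x" using Suc by auto
    moreover have "zprod p l x = x" using False zprod_apply[OF assms, of l x] by auto
    ultimately show ?thesis using False by auto
  qed
qed

lemma zprod_permutes: "zprod p l permutes {1..l*p}"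
proof (induct l)
  case 0 show ?case unfolding zprod_0 by (rule permutes_id)
next
  case (Suc l)
  have "zprod p l permutes {1..Suc l * p}"
    using permutes_subset[OF Suc] by auto
  moreover have "set [p*l+1 ..< p*Suc l+1] \<subseteq> {1..Suc l * p}" by (auto simp: mult.commute)
  hence "cycle_of_list [p*l+1 ..< p*Suc l+1] permutes {1..Suc l * p}"
    by (rule permutes_subset[OF cycle_permutes])
  hence "zcyc p (Suc l) permutes {1..Suc l * p}"
    by (simp only: zcyc_def diff_Suc_1)
  ultimately show ?case unfolding zprod_Suc by (rule permutes_compose[rotated])
qed

locale prime_cycle =
  fixes p l :: nat
  assumes prime_p: "prime p" and l_pos: "1 \<le> l"
begin

abbreviation R :: "(nat \<Rightarrow> nat) set" where "R \<equiv> Rgrp p l"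

lemma p_gt_1: "p > 1"
  using prime_p prime_gt_1_nat by blast

lemma zprod_funpow_mod: "zprod p l ^^ k = zprod p l ^^ (k mod p)"
  using p_gt_1 by (intro ext) (simp add: zprod_funpow mod_add_right_eq)

lemma zprod_funpow_p: "zprod p l ^^ p = id"
  using zprod_funpow_mod[of p] by simp

lemma inj_on_zprod_orbit:
  assumes "x \<in> {1..l*p}"
  shows "inj_on (\<lambda>k. (zprod p l ^^ k) x) {..<p}"
proof
  fix j k assume jk: "j \<in> {..<p}" "k \<in> {..<p}" "(zprod p l ^^ j) x = (zprod p l ^^ k) x"
  hence "[(x-1) mod p + j = (x-1) mod p + k] (mod p)"
    using assms p_gt_1 by (simp add: zprod_funpow cong_def)
  thus "j = k" using jk by (simp add: cong_add_lcancel_nat cong_less_modulus_unique_nat)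
qed

lemma Rgrp_eq_powers: "R = (\<lambda>k. zprod p l ^^ k) ` {..<p}"
proof -
  have "zprod p l ^^ k \<in> (\<lambda>k. zprod p l ^^ k) ` {..<p}" for k
    using zprod_funpow_mod[of k] p_gt_1 by (intro image_eqI[where x="k mod p"]) simp_all
  thus ?thesis unfolding Rgrp_def by auto
qed

lemma inj_on_zprod_powers: "inj_on (\<lambda>k. zprod p l ^^ k) {..<p}"
proof
  fix j k assume jk: "j \<in> {..<p}" "k \<in> {..<p}" "zprod p l ^^ j = zprod p l ^^ k"
  have "1 \<in> {1..l*p}" using l_pos p_gt_1 by simp
  from inj_on_zprod_orbit[OF this] show "j = k" using jk by (simp add: inj_on_def)
qed

lemma card_Rgrp: "card R = p"
  using Rgrp_eq_powers inj_on_zprod_powers by (simp add: card_image)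

lemma finite_Rgrp: "finite R"
  using Rgrp_eq_powers by simp

lemma zprod_in_Rgrp: "zprod p l \<in> R"
  unfolding Rgrp_def by (rule range_eqI[of _ _ 1]) simp

lemma id_in_Rgrp: "id \<in> R"
  unfolding Rgrp_def by (rule range_eqI[of _ _ 0]) simp

lemma zprod_neq_id: "zprod p l \<noteq> id"
  using inj_on_zprod_powers p_gt_1 by (force simp: inj_on_def)

lemma Rgrp_comp_closed: "h \<in> R \<Longrightarrow> g \<in> R \<Longrightarrow> h \<circ> g \<in> R"
  unfolding Rgrp_def by (auto simp: funpow_add[symmetric])

lemma Rgrp_permutes: "h \<in> R \<Longrightarrow> h permutes {1..l*p}"
  unfolding Rgrp_def using permutes_funpow[OF zprod_permutes] by blast

lemma Rgrp_inv_closed: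
  assumes "h \<in> R"
  shows "inv' h \<in> R"
proof -
  obtain k where k: "k < p" "h = zprod p l ^^ k" using assms Rgrp_eq_powers by auto
  have "inv' h = zprod p l ^^ (p - k)"
    using k zprod_funpow_p by (intro inv_unique_comp) (simp_all add: funpow_add[symmetric])
  thus ?thesis unfolding Rgrp_def by simp
qed

text \<open>\<open>R\<close> has prime order, so any element other than \<open>id\<close> generates it.\<close>

lemma Rgrp_generated_by:
  assumes "G \<subseteq> R" "id \<in> G" "\<And>a b. a \<in> G \<Longrightarrow> b \<in> G \<Longrightarrow> a \<circ> b \<in> G"
    and "h \<in> G" "h \<noteq> id"
  shows "G = R"
proof -
  have powers: "g ^^ m \<in> G" if "g \<in> G" for g m
    using that assms(2,3) by (induct m) simp_all
  obtain k where k: "k < p" "h = zprod p l ^^ k" using assms(1,4) Rgrp_eq_powers by auto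
  have "k \<noteq> 0" using k assms(5) by auto
  hence "\<not> p dvd k" using k by (auto dest: dvd_imp_le)
  hence "coprime k p" using prime_p prime_imp_coprime coprime_commute by blast
  then obtain x y where "k * x = p * y + 1"
    using bezout_nat[OF \<open>k \<noteq> 0\<close>, of p] by auto
  hence "(k * x) mod p = 1" using p_gt_1 by (simp add: Suc_times_mod_eq)
  hence "h ^^ x = zprod p l"
    unfolding k(2) funpow_mult using zprod_funpow_mod[of "k*x"] by simp
  hence "zprod p l \<in> G" using powers[OF assms(4)] by metis
  hence "R \<subseteq> G" unfolding Rgrp_def using powers by blast
  thus ?thesis using assms(1) by auto
qed

end

section \<open>Set partitions\<close>

lemma pimg_comp: "pimg (f \<circ> g) P = pimg f (pimg g P)"
  unfolding pimg_def by (simp add: image_comp)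

lemma pimg_id: "pimg id P = P"
  unfolding pimg_def by simp

lemma pimg_Un: "pimg g (P \<union> Q) = pimg g P \<union> pimg g Q"
  unfolding pimg_def by (rule image_Un)

lemma pimg_inv_pimg: "bij g \<Longrightarrow> pimg (inv' g) (pimg g P) = P"
  by (metis bij_is_inj inv_o_cancel pimg_comp pimg_id)

lemma foulkes_basis_pimg:
  assumes "inj g" "g ` A = A" "P \<in> foulkes_basis A a"
  shows "pimg g P \<in> foulkes_basis A a"
proof -
  have part: "partition_on A P" and card: "\<forall>X\<in>P. card X = a"
    using assms(3) unfolding foulkes_basis_def by auto
  have "partition_on (g ` A) ((`) g ` P - {{}})"
    using partition_on_inj_image[OF part inj_on_subset[OF assms(1) subset_UNIV]] .
  moreover have "(`) g ` P - {{}} = pimg g P"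
    using partition_onD3[OF part] unfolding pimg_def by auto
  moreover have "card (g ` X) = card X" for X
    using assms(1) by (simp add: card_image inj_on_subset)
  ultimately show ?thesis
    using assms(2) card unfolding foulkes_basis_def pimg_def by auto
qed

lemma foulkes_basis_pimg_iff:
  assumes "bij g" "g ` A = A"
  shows "pimg g P \<in> foulkes_basis A a \<longleftrightarrow> P \<in> foulkes_basis A a"
proof
  have "inj (inv' g)" using assms(1) bij_imp_bij_inv bij_is_inj by blast
  moreover have "inv' g ` A = A"
    using image_inv_f_f[OF bij_is_inj[OF assms(1)], of A] assms(2) by simp
  moreover assume "pimg g P \<in> foulkes_basis A a"
  ultimately show "P \<in> foulkes_basis A a"
    using foulkes_basis_pimg pimg_inv_pimg[OF assms(1)] by metis
qed (rule foulkes_basis_pimg[OF bij_is_inj[OF assms(1)] assms(2)])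

lemma foulkes_basis_pimg_permutes_iff:
  "g permutes A \<Longrightarrow> pimg g P \<in> foulkes_basis A a \<longleftrightarrow> P \<in> foulkes_basis A a"
  by (simp add: foulkes_basis_pimg_iff permutes_bij permutes_image)

lemma foulkes_basis_block_subset: "P \<in> foulkes_basis A a \<Longrightarrow> X \<in> P \<Longrightarrow> X \<subseteq> A"
  unfolding foulkes_basis_def using partition_onD1 by blast

lemma image_subset_invariant_iff: "inj g \<Longrightarrow> g ` B = B \<Longrightarrow> g ` X \<subseteq> B \<longleftrightarrow> X \<subseteq> B"
  by (metis image_mono inj_image_subset_iff)

lemma pimg_blocks_within:
  assumes "inj g" "g ` B = B"
  shows "pimg g {X\<in>P. X \<subseteq> B} = {Y\<in>pimg g P. Y \<subseteq> B}"
  unfolding pimg_def using image_subset_invariant_iff[OF assms] by auto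

lemma partition_on_Un:
  assumes "partition_on A P" "partition_on B Q" "A \<inter> B = {}"
  shows "partition_on (A \<union> B) (P \<union> Q)"
proof (rule partition_onI)
  show "\<Union>(P \<union> Q) = A \<union> B" using assms(1,2) partition_onD1 by auto
  show "{} \<notin> P \<union> Q" using assms(1,2) partition_onD3 by auto
  have "X \<subseteq> A" if "X \<in> P" for X using that partition_onD1[OF assms(1)] by auto
  moreover have "Y \<subseteq> B" if "Y \<in> Q" for Y using that partition_onD1[OF assms(2)] by auto
  moreover have "disjnt X Y" if "X \<in> P" "Y \<in> P \<or> Y \<in> Q" "X \<noteq> Y" for X Y
    using that assms(3) partition_onD2[OF assms(1)] calculation
    by (simp add: pairwise_def disjnt_def) blast
  moreover have "disjnt X Y" if "X \<in> Q" "Y \<in> Q" "X \<noteq> Y" for X Y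
    using that partition_onD2[OF assms(2)] by (auto simp: pairwise_def)
  ultimately show "disjnt X Y" if "X \<in> P \<union> Q" "Y \<in> P \<union> Q" "X \<noteq> Y" for X Y
    using that by (metis Un_iff disjnt_sym)
qed

lemma partition_on_blocks_within:
  assumes "partition_on A P" "\<forall>X\<in>P. X \<subseteq> B \<or> X \<inter> B = {}" "B \<subseteq> A"
  shows "partition_on B {X\<in>P. X \<subseteq> B}"
proof (rule partition_onI)
  show "\<Union>{X\<in>P. X \<subseteq> B} = B"
    using assms partition_onD1[OF assms(1)] by blast
  show "{} \<notin> {X\<in>P. X \<subseteq> B}" using partition_onD3[OF assms(1)] by auto
  show "disjnt X Y" if "X \<in> {X\<in>P. X \<subseteq> B}" "Y \<in> {X\<in>P. X \<subseteq> B}" "X \<noteq> Y" for X Y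
    using that partition_onD2[OF assms(1)] by (auto simp: pairwise_def)
qed

lemma foulkes_basis_Un:
  assumes P: "P \<in> foulkes_basis A a" and Q: "Q \<in> foulkes_basis B a" and AB: "A \<inter> B = {}"
  shows "P \<union> Q \<in> foulkes_basis (A \<union> B) a"
    "{X \<in> P \<union> Q. X \<subseteq> A} = P" "{X \<in> P \<union> Q. X \<subseteq> B} = Q"
proof -
  have pP: "partition_on A P" and pQ: "partition_on B Q"
    using P Q unfolding foulkes_basis_def by auto
  show "P \<union> Q \<in> foulkes_basis (A \<union> B) a"
    using partition_on_Un[OF pP pQ AB] P Q unfolding foulkes_basis_def by auto
  have "X \<subseteq> A" "X \<noteq> {}" if "X \<in> P" for X
    using that partition_onD1[OF pP] partition_onD3[OF pP] by auto
  hence PA: "X \<subseteq> A" "\<not> X \<subseteq> B" if "X \<in> P" for X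
    using that AB by blast+
  have "Y \<subseteq> B" "Y \<noteq> {}" if "Y \<in> Q" for Y
    using that partition_onD1[OF pQ] partition_onD3[OF pQ] by auto
  hence "Y \<subseteq> B" "\<not> Y \<subseteq> A" if "Y \<in> Q" for Y
    using that AB by blast+
  with PA show "{X \<in> P \<union> Q. X \<subseteq> A} = P" "{X \<in> P \<union> Q. X \<subseteq> B} = Q"
    by blast+
qed

lemma foulkes_basis_split:
  assumes P: "P \<in> foulkes_basis (A \<union> B) a" and AB: "A \<inter> B = {}"
    and blocks: "\<forall>X\<in>P. X \<subseteq> A \<or> X \<subseteq> B"
  shows "{X\<in>P. X \<subseteq> A} \<in> foulkes_basis A a" "{X\<in>P. X \<subseteq> B} \<in> foulkes_basis B a"
    "P = {X\<in>P. X \<subseteq> A} \<union> {X\<in>P. X \<subseteq> B}"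
proof -
  have part: "partition_on (A \<union> B) P" and card: "\<forall>X\<in>P. card X = a"
    using P unfolding foulkes_basis_def by auto
  have "\<forall>X\<in>P. X \<subseteq> A \<or> X \<inter> A = {}" "\<forall>X\<in>P. X \<subseteq> B \<or> X \<inter> B = {}"
    using blocks AB partition_onD3[OF part] by blast+
  thus "{X\<in>P. X \<subseteq> A} \<in> foulkes_basis A a" "{X\<in>P. X \<subseteq> B} \<in> foulkes_basis B a"
    using partition_on_blocks_within[OF part] card unfolding foulkes_basis_def by auto
  show "P = {X\<in>P. X \<subseteq> A} \<union> {X\<in>P. X \<subseteq> B}" using blocks by blast
qed

lemma card_foulkes_basis:
  assumes "finite A" "P \<in> foulkes_basis A a"
  shows "card A = a * card P"
proof -
  have part: "partition_on A P" and card: "\<forall>X\<in>P. card X = a"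
    using assms(2) unfolding foulkes_basis_def by auto
  have "card A = sum card P"
    using card_Union_disjoint[OF partition_onD2[OF part]] partition_onD1[OF part] assms(1)
    by (metis Union_upper finite_subset)
  thus ?thesis using card by simp
qed

section \<open>Quotients of spaces of coefficient functions\<close>

definition fun_subspace :: "('b \<Rightarrow> 'a::field) set \<Rightarrow> bool" where
  "fun_subspace K \<longleftrightarrow> (\<lambda>P. 0) \<in> K \<and> (\<forall>v\<in>K. \<forall>w\<in>K. (\<lambda>P. v P + w P) \<in> K)
     \<and> (\<forall>v\<in>K. \<forall>c. (\<lambda>P. c * v P) \<in> K)"

definition fcoset :: "('b \<Rightarrow> 'a::field) set \<Rightarrow> ('b \<Rightarrow> 'a) \<Rightarrow> ('b \<Rightarrow> 'a) set" where
  "fcoset K v = (\<lambda>k P. v P + k P) ` K"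

abbreviation quot_foulkes :: "nat set \<Rightarrow> nat \<Rightarrow> (nat set set \<Rightarrow> 'a::field) set
    \<Rightarrow> (nat set set \<Rightarrow> 'a) set \<Rightarrow> ((nat set set \<Rightarrow> 'a) set, 'a) fmod" where
  "quot_foulkes A a S K \<equiv> quot_mod (sub_mod (foulkes A a) S) K"

lemma mcoset_sub_foulkes: "mcoset (sub_mod (foulkes A a) S) K = fcoset K"
  unfolding mcoset_def fcoset_def sub_mod_def by (simp add: foulkes_def fun_eq_iff)

lemma quot_foulkes_simps:
  "mcar (quot_foulkes A a S K) = fcoset K ` S"
  "mzero (quot_foulkes A a S K) = fcoset K (\<lambda>P. 0)"
  "madd (quot_foulkes A a S K) C D = fcoset K (\<lambda>P. (SOME v. v \<in> C) P + (SOME w. w \<in> D) P)"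
  "msmult (quot_foulkes A a S K) c C = fcoset K (\<lambda>P. c * (SOME v. v \<in> C) P)"
  "mact (quot_foulkes A a S K) g C = fcoset K (\<lambda>P. (SOME v. v \<in> C) (pimg (inv' g) P))"
  unfolding quot_mod_def mcoset_sub_foulkes by (simp_all add: sub_mod_def foulkes_def)

context
  fixes K :: "('b \<Rightarrow> 'a::field) set"
  assumes K: "fun_subspace K"
begin

lemma fun_subspace_zero: "(\<lambda>P. 0) \<in> K"
  using K unfolding fun_subspace_def by blast

lemma fun_subspace_add: "v \<in> K \<Longrightarrow> w \<in> K \<Longrightarrow> (\<lambda>P. v P + w P) \<in> K"
  using K unfolding fun_subspace_def by blast

lemma fun_subspace_smult: "v \<in> K \<Longrightarrow> (\<lambda>P. c * v P) \<in> K"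
  using K unfolding fun_subspace_def by blast

lemma fun_subspace_diff: "v \<in> K \<Longrightarrow> w \<in> K \<Longrightarrow> (\<lambda>P. v P - w P) \<in> K"
  using fun_subspace_add[of v "\<lambda>P. (-1) * w P"] fun_subspace_smult[of w "-1"] by simp

lemma fun_subspace_sum: "(\<And>i. i < (n::nat) \<Longrightarrow> f i \<in> K) \<Longrightarrow> (\<lambda>P. \<Sum>i<n. f i P) \<in> K"
  by (induct n arbitrary: f) (simp_all add: fun_subspace_zero fun_subspace_add)

lemma fcoset_self: "v \<in> fcoset K v"
  unfolding fcoset_def using fun_subspace_zero by force

lemma fcoset_eq_iff: "fcoset K v = fcoset K w \<longleftrightarrow> (\<lambda>P. v P - w P) \<in> K"
proof
  assume "fcoset K v = fcoset K w"
  then obtain k where k: "k \<in> K" "w = (\<lambda>P. v P + k P)"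
    using fcoset_self[of w] unfolding fcoset_def by auto
  thus "(\<lambda>P. v P - w P) \<in> K" using fun_subspace_smult[of k "-1"] by simp
next
  assume d: "(\<lambda>P. v P - w P) \<in> K"
  have shift: "fcoset K v \<subseteq> fcoset K w" if "(\<lambda>P. v P - w P) \<in> K" for v w
  proof
    fix x assume "x \<in> fcoset K v"
    then obtain k where k: "k \<in> K" "x = (\<lambda>P. v P + k P)" unfolding fcoset_def by auto
    hence "(\<lambda>P. (v P - w P) + k P) \<in> K" using fun_subspace_add that by blast
    thus "x \<in> fcoset K w" unfolding fcoset_def k(2) by (force simp: algebra_simps)
  qed
  have "(\<lambda>P. w P - v P) \<in> K" using fun_subspace_diff[OF fun_subspace_zero d] by simp
  thus "fcoset K v = fcoset K w" using shift d by blast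
qed

lemma fcoset_eq_of_mem:
  assumes "u \<in> fcoset K v"
  shows "fcoset K u = fcoset K v"
proof -
  obtain k where "k \<in> K" "u = (\<lambda>P. v P + k P)" using assms unfolding fcoset_def by auto
  thus ?thesis by (simp add: fcoset_eq_iff)
qed

lemma some_in_fcoset: "(SOME u. u \<in> fcoset K v) \<in> fcoset K v"
  using fcoset_self[of v] by (metis someI)

lemma fcoset_subset:
  assumes "fun_subspace S" "K \<subseteq> S" "v \<in> S"
  shows "fcoset K v \<subseteq> S"
  using assms unfolding fcoset_def fun_subspace_def by blast

end

context
  fixes K :: "(nat set set \<Rightarrow> 'a::field) set"
  assumes K: "fun_subspace K"
begin

lemma quot_foulkes_add:
  "madd (quot_foulkes A a S K) (fcoset K v) (fcoset K w) = fcoset K (\<lambda>P. v P + w P)"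
proof -
  obtain k1 k2 where k: "k1 \<in> K" "k2 \<in> K"
    "(SOME u. u \<in> fcoset K v) = (\<lambda>P. v P + k1 P)" "(SOME u. u \<in> fcoset K w) = (\<lambda>P. w P + k2 P)"
    using some_in_fcoset[OF K, of v] some_in_fcoset[OF K, of w] unfolding fcoset_def by blast
  thus ?thesis
    using fun_subspace_add[OF K k(1,2)] by (simp add: quot_foulkes_simps fcoset_eq_iff[OF K] algebra_simps)
qed

lemma quot_foulkes_smult:
  "msmult (quot_foulkes A a S K) c (fcoset K v) = fcoset K (\<lambda>P. c * v P)"
proof -
  obtain k where k: "k \<in> K" "(SOME u. u \<in> fcoset K v) = (\<lambda>P. v P + k P)"
    using some_in_fcoset[OF K, of v] unfolding fcoset_def by blast
  thus ?thesis
    using fun_subspace_smult[OF K k(1)] by (simp add: quot_foulkes_simps fcoset_eq_iff[OF K] algebra_simps)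
qed

lemma quot_foulkes_act:
  assumes "\<forall>k\<in>K. (\<lambda>P. k (pimg (inv' g) P)) \<in> K"
  shows "mact (quot_foulkes A a S K) g (fcoset K v) = fcoset K (\<lambda>P. v (pimg (inv' g) P))"
proof -
  obtain k where k: "k \<in> K" "(SOME u. u \<in> fcoset K v) = (\<lambda>P. v P + k P)"
    using some_in_fcoset[OF K, of v] unfolding fcoset_def by blast
  thus ?thesis using assms by (simp add: quot_foulkes_simps fcoset_eq_iff[OF K])
qed

lemma quot_foulkes_self_zero: "zero_module (quot_foulkes A a K K)"
proof -
  have "fcoset K v = fcoset K (\<lambda>P. 0)" if "v \<in> K" for v
    using that by (simp add: fcoset_eq_iff[OF K])
  thus ?thesis
    unfolding zero_module_def quot_foulkes_simps using fun_subspace_zero[OF K] by blast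
qed

lemma quot_foulkes_iso:
  fixes F :: "(nat set set \<Rightarrow> 'a) \<Rightarrow> 'w" and M :: "('w, 'a) fmod"
  assumes S: "fun_subspace S" and KS: "K \<subseteq> S"
    and F_add: "\<And>v w. v \<in> S \<Longrightarrow> w \<in> S \<Longrightarrow> F (\<lambda>P. v P + w P) = madd M (F v) (F w)"
    and F_smult: "\<And>v c. v \<in> S \<Longrightarrow> F (\<lambda>P. c * v P) = msmult M c (F v)"
    and S_act: "\<And>g v. g \<in> G \<Longrightarrow> v \<in> S \<Longrightarrow> (\<lambda>P. v (pimg (inv' g) P)) \<in> S"
    and F_act: "\<And>g v. g \<in> G \<Longrightarrow> v \<in> S \<Longrightarrow> F (\<lambda>P. v (pimg (inv' g) P)) = mact M g (F v)"
    and F_surj: "F ` S = mcar M"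
    and F_ker: "\<And>v w. v \<in> S \<Longrightarrow> w \<in> S \<Longrightarrow> F v = F w \<longleftrightarrow> (\<lambda>P. v P - w P) \<in> K"
  shows "mod_iso G (quot_foulkes A a S K) M"
proof -
  let ?Q = "quot_foulkes A a S K"
  define rep where "rep C = (SOME v. v \<in> C)" for C :: "(nat set set \<Rightarrow> 'a) set"
  have rep: "rep (fcoset K v) \<in> S" "F (rep (fcoset K v)) = F v" if "v \<in> S" for v
  proof -
    have u: "rep (fcoset K v) \<in> fcoset K v" unfolding rep_def by (rule some_in_fcoset[OF K])
    thus uS: "rep (fcoset K v) \<in> S" using fcoset_subset[OF K S KS that] by blast
    have "(\<lambda>P. rep (fcoset K v) P - v P) \<in> K"
      using fcoset_eq_of_mem[OF K u] by (simp add: fcoset_eq_iff[OF K])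
    thus "F (rep (fcoset K v)) = F v" using F_ker[OF uS that] by simp
  qed
  have "inj_on (F \<circ> rep) (fcoset K ` S)"
  proof (rule inj_onI)
    fix C D assume "C \<in> fcoset K ` S" "D \<in> fcoset K ` S" "(F \<circ> rep) C = (F \<circ> rep) D"
    then obtain v w where "v \<in> S" "w \<in> S" "C = fcoset K v" "D = fcoset K w" "F v = F w"
      using rep(2) by auto
    thus "C = D" using F_ker fcoset_eq_iff[OF K] by simp
  qed
  moreover have "(F \<circ> rep) ` fcoset K ` S = mcar M"
    unfolding F_surj[symmetric] image_comp using rep(2) by (auto intro: image_cong)
  moreover have "(F \<circ> rep) (madd ?Q (fcoset K v) (fcoset K w))
      = madd M ((F \<circ> rep) (fcoset K v)) ((F \<circ> rep) (fcoset K w))"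
    if "v \<in> S" "w \<in> S" for v w
    using that rep fun_subspace_add[OF S rep(1) rep(1)]
    by (simp add: quot_foulkes_simps rep_def[symmetric] F_add)
  moreover have "(F \<circ> rep) (msmult ?Q c (fcoset K v)) = msmult M c ((F \<circ> rep) (fcoset K v))"
    if "v \<in> S" for v c
    using that rep fun_subspace_smult[OF S rep(1)]
    by (simp add: quot_foulkes_simps rep_def[symmetric] F_smult)
  moreover have "(F \<circ> rep) (mact ?Q g (fcoset K v)) = mact M g ((F \<circ> rep) (fcoset K v))"
    if "g \<in> G" "v \<in> S" for g v
    using that rep S_act[OF that(1) rep(1)]
    by (simp add: quot_foulkes_simps rep_def[symmetric] F_act)
  ultimately show ?thesis
    unfolding mod_iso_def bij_betw_def quot_foulkes_simps(1) by blast
qed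

end

section \<open>The Brauer quotient of a Foulkes module at \<open>R\<^sub>l\<close>\<close>

definition fixed_partition :: "(nat \<Rightarrow> nat) set \<Rightarrow> nat set set \<Rightarrow> bool" where
  "fixed_partition G P \<longleftrightarrow> (\<forall>h\<in>G. pimg h P = P)"

text \<open>For \<open>G = R\<^sub>l\<close> this is the kernel of the Brauer quotient map.\<close>

definition fixed_vanishing :: "nat set \<Rightarrow> nat \<Rightarrow> (nat \<Rightarrow> nat) set \<Rightarrow> (nat set set \<Rightarrow> 'a::field) set" where
  "fixed_vanishing A a G = {v \<in> fixed_pts (foulkes A a) G. \<forall>P. fixed_partition G P \<longrightarrow> v P = 0}"

definition orbit_trace :: "(nat \<Rightarrow> nat) set \<Rightarrow> (nat set set \<Rightarrow> 'a::field) \<Rightarrow> nat set set \<Rightarrow> 'a" where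
  "orbit_trace G w P = (\<Sum>h\<in>G. w (pimg h P))"

lemma fun_subspace_fixed_pts: "fun_subspace (fixed_pts (foulkes A a) G)"
  unfolding fun_subspace_def fixed_pts_def by (auto simp: foulkes_def fun_eq_iff)

lemma fun_subspace_fixed_vanishing: "fun_subspace (fixed_vanishing A a G)"
  unfolding fun_subspace_def fixed_vanishing_def fixed_pts_def by (auto simp: foulkes_def fun_eq_iff)

lemma fixed_vanishing_subset: "fixed_vanishing A a G \<subseteq> fixed_pts (foulkes A a) G"
  unfolding fixed_vanishing_def by auto

lemma mcar_foulkes: "v \<in> mcar (foulkes A a) \<longleftrightarrow> (\<forall>P. P \<notin> foulkes_basis A a \<longrightarrow> v P = 0)"
  by (simp add: foulkes_def)

context prime_cycle
begin

lemma Rgrp_permutes_interval: "l*p \<le> N \<Longrightarrow> h \<in> R \<Longrightarrow> h permutes {1..N}"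
  using Rgrp_permutes permutes_subset by fastforce

lemma fixed_pts_Rgrp_iff:
  "v \<in> fixed_pts (foulkes A a) R \<longleftrightarrow>
     v \<in> mcar (foulkes A a) \<and> (\<forall>h\<in>R. \<forall>P. v (pimg h P) = v P)"
proof -
  have "(\<forall>h\<in>R. (\<lambda>P. v (pimg (inv' h) P)) = v) \<longleftrightarrow> (\<forall>h\<in>R. \<forall>P. v (pimg h P) = v P)"
  proof
    assume inv: "\<forall>h\<in>R. (\<lambda>P. v (pimg (inv' h) P)) = v"
    show "\<forall>h\<in>R. \<forall>P. v (pimg h P) = v P"
    proof (intro ballI allI)
      fix h P assume h: "h \<in> R"
      have "(\<lambda>P. v (pimg (inv' (inv' h)) P)) = v" using inv Rgrp_inv_closed[OF h] by blast
      thus "v (pimg h P) = v P"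
        unfolding inv_inv_eq[OF permutes_bij[OF Rgrp_permutes[OF h]]] by (rule fun_cong)
    qed
  qed (auto simp: Rgrp_inv_closed)
  thus ?thesis unfolding fixed_pts_def by (auto simp: foulkes_def)
qed

text \<open>The stabiliser of a partition is a subgroup of \<open>R\<close>, hence trivial unless it is all of \<open>R\<close>.\<close>

lemma inj_on_Rgrp_orbit:
  assumes "\<not> fixed_partition R P"
  shows "inj_on (\<lambda>h. pimg h P) R"
proof
  define stab where "stab = {h \<in> R. pimg h P = P}"
  have "stab \<noteq> R" using assms unfolding stab_def fixed_partition_def by auto
  moreover have "stab \<subseteq> R" "id \<in> stab" "\<And>a b. a \<in> stab \<Longrightarrow> b \<in> stab \<Longrightarrow> a \<circ> b \<in> stab"
    unfolding stab_def using id_in_Rgrp Rgrp_comp_closed by (auto simp: pimg_id pimg_comp)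
  ultimately have stab_id: "h = id" if "h \<in> stab" for h
    using Rgrp_generated_by[of stab h] that by argo
  fix h g assume hg: "h \<in> R" "g \<in> R" "pimg h P = pimg g P"
  have bij_g: "bij g" using permutes_bij[OF Rgrp_permutes[OF hg(2)]] .
  have "pimg (inv' g \<circ> h) P = P" using hg(3) pimg_inv_pimg[OF bij_g] by (simp add: pimg_comp)
  hence "inv' g \<circ> h = id"
    using stab_id Rgrp_comp_closed[OF Rgrp_inv_closed[OF hg(2)] hg(1)] unfolding stab_def by blast
  hence "g \<circ> (inv' g \<circ> h) = g" by simp
  moreover have "g \<circ> inv' g = id" using bij_g surj_iff bij_is_surj by blast
  ultimately show "h = g" by (simp add: comp_assoc[symmetric])
qed

lemma subgroup_psubset_Rgrp:
  assumes "subgroup P (sym_group N)" "P \<subset> R"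
  shows "P = {id}"
proof -
  have "id \<in> P" using subgroup.one_closed[OF assms(1)] by (simp add: sym_group_one)
  moreover have "a \<circ> b \<in> P" if "a \<in> P" "b \<in> P" for a b
    using subgroup.m_closed[OF assms(1) that] by (simp add: sym_group_mult)
  ultimately show ?thesis using Rgrp_generated_by[of P] assms(2) by blast
qed

lemma rtrace_id_Rgrp: "rtrace (foulkes A a) {id} R w = orbit_trace R w"
proof
  fix P
  have "pcosets {id} R = (\<lambda>g. {g}) ` R" unfolding pcosets_def by auto
  hence "rtrace (foulkes A a) {id} R w P = (\<Sum>h\<in>R. w (pimg (inv' h) P))"
    unfolding rtrace_def by (simp add: foulkes_def sum.reindex)
  also have "\<dots> = orbit_trace R w P"
    unfolding orbit_trace_def
    by (rule sum.reindex_bij_witness[where i="inv'" and j="inv'"])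
      (auto intro: Rgrp_inv_closed simp: inv_inv_eq[OF permutes_bij[OF Rgrp_permutes]])
  finally show "rtrace (foulkes A a) {id} R w P = orbit_trace R w P" .
qed

lemma orbit_trace_in_fixed_vanishing:
  assumes char: "CHAR('a::field) = p" and N: "l*p \<le> N"
    and w: "(w :: nat set set \<Rightarrow> 'a) \<in> mcar (foulkes {1..N} a)"
  shows "orbit_trace R w \<in> fixed_vanishing {1..N} a R"
proof -
  have "orbit_trace R w \<in> mcar (foulkes {1..N} a)"
    using w foulkes_basis_pimg_permutes_iff[OF Rgrp_permutes_interval[OF N]]
    unfolding mcar_foulkes orbit_trace_def by simp
  moreover have "orbit_trace R w (pimg g P) = orbit_trace R w P" if g: "g \<in> R" for g P
    unfolding orbit_trace_def
  proof (rule sum.reindex_bij_witness[where i="\<lambda>h. h \<circ> inv' g" and j="\<lambda>h. h \<circ> g"])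
    have "g \<circ> inv' g = id" "inv' g \<circ> g = id" using permutes_inv_o[OF Rgrp_permutes[OF g]] by auto
    thus "h \<circ> g \<circ> inv' g = h" "h \<circ> inv' g \<circ> g = h" for h by (simp_all add: comp_assoc)
    show "h \<circ> g \<in> R" "h \<circ> inv' g \<in> R" if "h \<in> R" for h
      using that g Rgrp_comp_closed Rgrp_inv_closed by auto
    show "w (pimg (h \<circ> g) P) = w (pimg h (pimg g P))" for h by (simp add: pimg_comp)
  qed
  moreover have "orbit_trace R w P = 0" if "fixed_partition R P" for P
  proof -
    have "orbit_trace R w P = of_nat (card R) * w P"
      using that unfolding orbit_trace_def fixed_partition_def by simp
    thus ?thesis using char card_Rgrp of_nat_CHAR[where 'a='a] by simp
  qed
  ultimately show ?thesis unfolding fixed_vanishing_def fixed_pts_Rgrp_iff by blast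
qed

lemma Rgrp_orbit_pimg:
  assumes g: "g \<in> R"
  shows "(\<lambda>h. pimg h (pimg g P)) ` R = (\<lambda>h. pimg h P) ` R"
proof -
  have "(\<lambda>h. h \<circ> g) ` R = R"
  proof
    show "(\<lambda>h. h \<circ> g) ` R \<subseteq> R" using g Rgrp_comp_closed by auto
    have "h = h \<circ> inv' g \<circ> g" for h
      using permutes_inv_o(2)[OF Rgrp_permutes[OF g]] by (simp add: comp_assoc)
    thus "R \<subseteq> (\<lambda>h. h \<circ> g) ` R" using g Rgrp_comp_closed Rgrp_inv_closed by blast
  qed
  hence "(\<lambda>h. pimg h P) ` R = (\<lambda>h. pimg h P) ` (\<lambda>h. h \<circ> g) ` R" by simp
  also have "\<dots> = (\<lambda>h. pimg h (pimg g P)) ` R" by (simp add: image_image pimg_comp)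
  finally show ?thesis by simp
qed

text \<open>\<open>w\<close> is the restriction of \<open>v\<close> to a set of representatives of the free \<open>R\<close>-orbits.\<close>

lemma fixed_vanishing_eq_orbit_trace:
  assumes v: "(v :: nat set set \<Rightarrow> 'a::field) \<in> fixed_vanishing A a R"
  obtains w where "w \<in> mcar (foulkes A a)" "v = orbit_trace R w"
proof -
  have vm: "v \<in> mcar (foulkes A a)" and vi: "\<forall>h\<in>R. \<forall>P. v (pimg h P) = v P"
    and vz: "\<forall>P. fixed_partition R P \<longrightarrow> v P = 0"
    using v unfolding fixed_vanishing_def fixed_pts_Rgrp_iff by auto
  define rep where "rep P = (SOME Q. Q \<in> (\<lambda>h. pimg h P) ` R)" for P
  have rep_in: "rep P \<in> (\<lambda>h. pimg h P) ` R" for P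
    unfolding rep_def using id_in_Rgrp by (metis imageI someI)
  have rep_pimg: "rep (pimg g P) = rep P" if "g \<in> R" for g P
    unfolding rep_def Rgrp_orbit_pimg[OF that] ..
  define w where "w P = (if P = rep P then v P else 0)" for P
  have "v P = orbit_trace R w P" for P
  proof -
    have "orbit_trace R w P = (\<Sum>h\<in>R. if pimg h P = rep P then v P else 0)"
      unfolding orbit_trace_def w_def using rep_pimg vi by (intro sum.cong) (auto, metis)
    also have "\<dots> = v P"
    proof (cases "fixed_partition R P")
      case True
      hence "v P = 0" using vz by blast
      thus ?thesis by (simp only: if_cancel sum.neutral_const)
    next
      case False
      obtain h0 where h0: "h0 \<in> R" "rep P = pimg h0 P" using rep_in[of P] by auto
      have "(\<Sum>h\<in>R. if pimg h P = rep P then v P else 0) = (\<Sum>h\<in>R. if h = h0 then v P else 0)"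
        using inj_on_Rgrp_orbit[OF False] h0 by (intro sum.cong) (auto simp: inj_on_def)
      thus ?thesis using h0(1) finite_Rgrp by simp
    qed
    finally show ?thesis by simp
  qed
  moreover have "w \<in> mcar (foulkes A a)" using vm unfolding mcar_foulkes w_def by simp
  ultimately show ?thesis using that by blast
qed

lemma rtraces_proper_subgroups_Rgrp:
  assumes char: "CHAR('a::field) = p" and N: "l*p \<le> N"
  shows "{rtrace (foulkes {1..N} a) P R w | P w. subgroup P (sym_group N) \<and> P \<subset> R
      \<and> w \<in> fixed_pts (foulkes {1..N} a :: (nat set set \<Rightarrow> 'a, 'a) fmod) P}
    = fixed_vanishing {1..N} a R" (is "?T = _")
proof -
  let ?V = "foulkes {1..N} a :: (nat set set \<Rightarrow> 'a, 'a) fmod"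
  have fixed_id: "fixed_pts ?V {id} = mcar ?V"
    unfolding fixed_pts_def by (auto simp: foulkes_def pimg_id)
  have "?T = orbit_trace R ` mcar ?V"
  proof (rule subset_antisym)
    show "?T \<subseteq> orbit_trace R ` mcar ?V"
    proof
      fix t assume "t \<in> ?T"
      then obtain P w where t: "t = rtrace ?V P R w" and P: "subgroup P (sym_group N)" "P \<subset> R"
        and w: "w \<in> fixed_pts ?V P" by blast
      have "P = {id}" using subgroup_psubset_Rgrp[OF P] .
      thus "t \<in> orbit_trace R ` mcar ?V" using t w fixed_id rtrace_id_Rgrp[of "{1..N}" a w] by simp
    qed
    have "subgroup {id} (sym_group N)"
      using group.triv_subgroup[OF sym_group_is_group] by (simp add: sym_group_one)
    moreover have "{id} \<subset> R" using id_in_Rgrp zprod_in_Rgrp zprod_neq_id by blast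
    ultimately show "orbit_trace R ` mcar ?V \<subseteq> ?T"
      using fixed_id rtrace_id_Rgrp[of "{1..N}" a, symmetric] by blast
  qed
  also have "\<dots> = fixed_vanishing {1..N} a R"
  proof
    show "orbit_trace R ` mcar ?V \<subseteq> fixed_vanishing {1..N} a R"
      using orbit_trace_in_fixed_vanishing[OF char N] by blast
    show "fixed_vanishing {1..N} a R \<subseteq> orbit_trace R ` mcar ?V"
      by (blast elim: fixed_vanishing_eq_orbit_trace)
  qed
  finally show ?thesis .
qed

lemma brauer_ker_foulkes:
  assumes char: "CHAR('a::field) = p" and N: "l*p \<le> N"
  shows "brauer_ker N (foulkes {1..N} a :: (nat set set \<Rightarrow> 'a, 'a) fmod) R
    = fixed_vanishing {1..N} a R"
proof
  let ?V = "foulkes {1..N} a :: (nat set set \<Rightarrow> 'a, 'a) fmod"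
  let ?T = "{rtrace ?V P R w | P w. subgroup P (sym_group N) \<and> P \<subset> R \<and> w \<in> fixed_pts ?V P}"
  note T = rtraces_proper_subgroups_Rgrp[OF char N, of a]
  show "brauer_ker N ?V R \<subseteq> fixed_vanishing {1..N} a R"
  proof
    fix v assume "v \<in> brauer_ker N ?V R"
    then obtain k :: nat and f where "\<forall>i<k. f i \<in> ?T" "v = (\<lambda>P. \<Sum>i<k. f i P)"
      unfolding brauer_ker_def mem_Collect_eq by (elim exE conjE) blast
    thus "v \<in> fixed_vanishing {1..N} a R"
      using fun_subspace_sum[OF fun_subspace_fixed_vanishing, of k f] unfolding T by blast
  qed
  show "fixed_vanishing {1..N} a R \<subseteq> brauer_ker N ?V R"
  proof
    fix v :: "nat set set \<Rightarrow> 'a" assume "v \<in> fixed_vanishing {1..N} a R"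
    hence "\<exists>(k::nat) f. (\<forall>i<k. f i \<in> ?T) \<and> v = (\<lambda>P. \<Sum>i<k. f i P)"
      unfolding T by (intro exI[of _ 1] exI[of _ "\<lambda>i. v"]) simp
    thus "v \<in> brauer_ker N ?V R" unfolding brauer_ker_def by (simp only: mem_Collect_eq)
  qed
qed

lemma brauer_quot_foulkes:
  assumes "CHAR('a::field) = p" "l*p \<le> N"
  shows "brauer_quot N (foulkes {1..N} a :: (nat set set \<Rightarrow> 'a, 'a) fmod) R
    = quot_foulkes {1..N} a (fixed_pts (foulkes {1..N} a) R) (fixed_vanishing {1..N} a R)"
  unfolding brauer_quot_def using brauer_ker_foulkes[OF assms] by simp

end

section \<open>The normaliser of \<open>R\<^sub>l\<close>\<close>

lemma permutes_disjoint_commute: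
  assumes f: "f permutes A" and g: "g permutes B" and AB: "A \<inter> B = {}"
  shows "f \<circ> g = g \<circ> f"
proof
  fix x
  consider "x \<in> A" | "x \<in> B" | "x \<notin> A" "x \<notin> B" by blast
  thus "(f \<circ> g) x = (g \<circ> f) x"
  proof cases
    case 1
    hence "x \<notin> B" "f x \<notin> B" using AB permutes_in_image[OF f] by auto
    thus ?thesis using permutes_not_in[OF g] by simp
  next
    case 2
    hence "x \<notin> A" "g x \<notin> A" using AB permutes_in_image[OF g] by auto
    thus ?thesis using permutes_not_in[OF f] by simp
  next
    case 3
    thus ?thesis using permutes_not_in[OF f] permutes_not_in[OF g] by simp
  qed
qed

lemma permutes_decompose:
  assumes g: "g permutes A \<union> B" and AB: "A \<inter> B = {}" and gA: "g ` A = A"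
  shows "restrict_id g A permutes A" "restrict_id g B permutes B"
    "g = restrict_id g A \<circ> restrict_id g B"
proof -
  have "B = (A \<union> B) - A" using AB by blast
  hence gB: "g ` B = B"
    using image_set_diff[OF permutes_inj[OF g]] permutes_image[OF g] gA by metis
  show "restrict_id g A permutes A" "restrict_id g B permutes B"
    using gA gB permutes_inj_on[OF g] by (auto intro!: permutes_restrict_id simp: bij_betw_def inj_on_subset)
  show "g = restrict_id g A \<circ> restrict_id g B"
    using permutes_not_in[OF g] gB AB by (auto simp: fun_eq_iff restrict_id_def)
qed

lemma conj_comp_bij_eq:
  assumes "bij f" "bij g" "g \<circ> h = h \<circ> g"
  shows "(f \<circ> g) \<circ> h \<circ> inv' (f \<circ> g) = f \<circ> h \<circ> inv' f"
proof -
  have "g \<circ> inv' g = id" using assms(2) bij_is_surj surj_iff by blast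
  hence "(f \<circ> g) \<circ> h \<circ> (inv' g \<circ> inv' f) = f \<circ> h \<circ> inv' f"
    using assms(3) by (metis comp_assoc comp_id)
  thus ?thesis using o_inv_distrib[OF assms(1,2)] by simp
qed

context prime_cycle
begin

lemma zprod_no_fixed_point:
  assumes "x \<in> {1..l*p}"
  shows "zprod p l x \<noteq> x"
proof
  assume "zprod p l x = x"
  hence "(zprod p l ^^ 1) x = (zprod p l ^^ 0) x" by simp
  thus False using inj_onD[OF inj_on_zprod_orbit[OF assms]] p_gt_1 by fastforce
qed

lemma normalizer_conj:
  assumes g: "g \<in> normalizer_S N R" and h: "h \<in> R"
  shows "g \<circ> h \<circ> inv' g \<in> R" "inv' g \<circ> h \<circ> g \<in> R"
proof -
  have gp: "g permutes {1..N}" and im: "(\<lambda>h. g \<circ> h \<circ> inv' g) ` R = R"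
    using g unfolding normalizer_S_def by auto
  show "g \<circ> h \<circ> inv' g \<in> R" using im h by blast
  obtain h' where h': "h' \<in> R" "h = g \<circ> h' \<circ> inv' g" using im h by force
  have "inv' g \<circ> h \<circ> g = (inv' g \<circ> g) \<circ> h' \<circ> (inv' g \<circ> g)" unfolding h'(2) by (simp add: comp_assoc)
  thus "inv' g \<circ> h \<circ> g \<in> R" using permutes_inv_o(2)[OF gp] h'(1) by simp
qed

text \<open>The normaliser permutes the fixed points of \<open>z\<^sub>1\<cdots>z\<^sub>l\<close>, hence also its support.\<close>

lemma normalizer_image_support:
  assumes g: "g \<in> normalizer_S N R"
  shows "g ` {1..l*p} = {1..l*p}"
proof -
  have gp: "g permutes {1..N}" using g unfolding normalizer_S_def by auto
  have "g x \<in> {1..l*p}" if x: "x \<in> {1..l*p}" for x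
  proof (rule ccontr)
    assume "g x \<notin> {1..l*p}"
    hence "(g \<circ> zprod p l \<circ> inv' g) (g x) = g x"
      using permutes_not_in[OF Rgrp_permutes[OF normalizer_conj(1)[OF g zprod_in_Rgrp]]] by blast
    hence "g (zprod p l x) = g x" using permutes_inverses(2)[OF gp] by simp
    thus False using zprod_no_fixed_point[OF x] permutes_inj[OF gp] by (auto dest: injD)
  qed
  hence "g ` {1..l*p} \<subseteq> {1..l*p}" by blast
  thus ?thesis using endo_inj_surj[OF finite_atLeastAtMost _ permutes_inj_on[OF gp]] by blast
qed

lemma normalizer_image_complement:
  assumes g: "g \<in> normalizer_S N R"
  shows "g ` {l*p<..N} = {l*p<..N}"
proof -
  have gp: "g permutes {1..N}" using g unfolding normalizer_S_def by auto
  have "{l*p<..N} = {1..N} - {1..l*p}" by auto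
  thus ?thesis using image_set_diff[OF permutes_inj[OF gp]] permutes_image[OF gp]
      normalizer_image_support[OF g] by metis
qed

lemma Rgrp_commute_complement:
  "g permutes {l*p<..N} \<Longrightarrow> h \<in> R \<Longrightarrow> g \<circ> h = h \<circ> g"
  using permutes_disjoint_commute Rgrp_permutes by (metis disjoint_iff greaterThanAtMost_iff atLeastAtMost_iff not_le)

lemma normalizer_decompose:
  assumes N: "l*p \<le> N"
  shows "normalizer_S N R
    = {g1 \<circ> g2 | g1 g2. g1 \<in> normalizer_S (l*p) R \<and> g2 permutes {l*p<..N}}"
proof
  have split: "{1..N} = {1..l*p} \<union> {l*p<..N}" "{1..l*p} \<inter> {l*p<..N} = {}" using N by auto
  show "normalizer_S N R \<subseteq> {g1 \<circ> g2 | g1 g2. g1 \<in> normalizer_S (l*p) R \<and> g2 permutes {l*p<..N}}"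
  proof
    fix g assume g: "g \<in> normalizer_S N R"
    define g1 where "g1 = restrict_id g {1..l*p}"
    define g2 where "g2 = restrict_id g {l*p<..N}"
    have gp: "g permutes {1..N}" and im: "(\<lambda>h. g \<circ> h \<circ> inv' g) ` R = R"
      using g unfolding normalizer_S_def by auto
    note dec = permutes_decompose[OF gp[unfolded split(1)] split(2) normalizer_image_support[OF g],
        folded g1_def g2_def]
    have "g1 \<circ> h \<circ> inv' g1 = g \<circ> h \<circ> inv' g" if "h \<in> R" for h
      using conj_comp_bij_eq[OF permutes_bij[OF dec(1)] permutes_bij[OF dec(2)]]
        Rgrp_commute_complement[OF dec(2) that] dec(3) by simp
    hence "g1 \<in> normalizer_S (l*p) R"
      unfolding normalizer_S_def using dec(1) im by (simp cong: image_cong)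
    thus "g \<in> {g1 \<circ> g2 | g1 g2. g1 \<in> normalizer_S (l*p) R \<and> g2 permutes {l*p<..N}}"
      using dec by blast
  qed
  show "{g1 \<circ> g2 | g1 g2. g1 \<in> normalizer_S (l*p) R \<and> g2 permutes {l*p<..N}} \<subseteq> normalizer_S N R"
  proof clarify
    fix g1 g2 assume g1: "g1 \<in> normalizer_S (l*p) R" and g2: "g2 permutes {l*p<..N}"
    have g1p: "g1 permutes {1..l*p}" and im: "(\<lambda>h. g1 \<circ> h \<circ> inv' g1) ` R = R"
      using g1 unfolding normalizer_S_def by auto
    have "g1 \<circ> g2 permutes {1..N}"
      using permutes_subset[OF g1p] permutes_subset[OF g2] split(1) by (blast intro: permutes_compose)
    moreover have "g1 \<circ> g2 \<circ> h \<circ> inv' (g1 \<circ> g2) = g1 \<circ> h \<circ> inv' g1" if "h \<in> R" for h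
      using conj_comp_bij_eq[OF permutes_bij[OF g1p] permutes_bij[OF g2]]
        Rgrp_commute_complement[OF g2 that] by simp
    ultimately show "g1 \<circ> g2 \<in> normalizer_S N R"
      unfolding normalizer_S_def using im by (simp cong: image_cong)
  qed
qed

end

section \<open>Fixed partitions split along the support of \<open>R\<^sub>l\<close>\<close>

context prime_cycle
begin

text \<open>A block meeting the support of \<open>z\<^sub>1\<cdots>z\<^sub>l\<close> and its complement would be invariant under
  \<open>z\<^sub>1\<cdots>z\<^sub>l\<close> (it shares the fixed points with its image) and so contain a whole orbit of size
  \<open>p > a\<close>.\<close>

lemma fixed_partition_blocks:
  assumes P: "P \<in> foulkes_basis {1..N} a" and fixed: "fixed_partition R P" and a: "a < p"
    and X: "X \<in> P"
  shows "X \<subseteq> {1..l*p} \<or> X \<subseteq> {l*p<..N}"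
proof (rule ccontr)
  assume straddle: "\<not> (X \<subseteq> {1..l*p} \<or> X \<subseteq> {l*p<..N})"
  have part: "partition_on {1..N} P" and card: "card X = a"
    using P X unfolding foulkes_basis_def by auto
  have XN: "X \<subseteq> {1..N}" using partition_onD1[OF part] X by auto
  obtain x where x: "x \<in> X" "x \<notin> {1..l*p}" using straddle by blast
  obtain y where "y \<in> X" "y \<notin> {l*p<..N}" using straddle by blast
  hence y: "y \<in> X" "y \<in> {1..l*p}" using XN by auto
  let ?z = "zprod p l"
  have "?z ` X \<in> P" using fixed zprod_in_Rgrp X unfolding fixed_partition_def pimg_def by blast
  moreover have "x \<in> ?z ` X" using x permutes_not_in[OF zprod_permutes] by (metis imageI)
  ultimately have zX: "?z ` X = X"
    using partition_onD2[OF part] X x(1) unfolding disjoint_def by blast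
  have "(?z ^^ k) y \<in> X" for k by (induct k) (use y zX in auto)
  hence "(\<lambda>k. (?z ^^ k) y) ` {..<p} \<subseteq> X" by blast
  hence "card ((\<lambda>k. (?z ^^ k) y) ` {..<p}) \<le> card X"
    using XN by (intro card_mono) (auto intro: finite_subset)
  thus False using card a card_image[OF inj_on_zprod_orbit[OF y(2)]] by simp
qed

lemma fixed_partition_split:
  assumes N: "l*p \<le> N" and P: "P \<in> foulkes_basis {1..N} a" and fixed: "fixed_partition R P"
    and a: "a < p"
  shows "{X\<in>P. X \<subseteq> {1..l*p}} \<in> foulkes_basis {1..l*p} a"
    "{X\<in>P. X \<subseteq> {l*p<..N}} \<in> foulkes_basis {l*p<..N} a"
    "P = {X\<in>P. X \<subseteq> {1..l*p}} \<union> {X\<in>P. X \<subseteq> {l*p<..N}}"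
proof -
  have split: "{1..N} = {1..l*p} \<union> {l*p<..N}" "{1..l*p} \<inter> {l*p<..N} = {}" using N by auto
  show "{X\<in>P. X \<subseteq> {1..l*p}} \<in> foulkes_basis {1..l*p} a"
    "{X\<in>P. X \<subseteq> {l*p<..N}} \<in> foulkes_basis {l*p<..N} a"
    "P = {X\<in>P. X \<subseteq> {1..l*p}} \<union> {X\<in>P. X \<subseteq> {l*p<..N}}"
    using foulkes_basis_split[OF P[unfolded split(1)] split(2)
        ballI[OF fixed_partition_blocks[OF P fixed a]]] by blast+
qed

lemma dvd_of_fixed_partition:
  assumes N: "l*p \<le> N" and P: "P \<in> foulkes_basis {1..N} a" and fixed: "fixed_partition R P"
    and a: "0 < a" "a < p"
  shows "a dvd l"
proof -
  have "l * p = a * card {X\<in>P. X \<subseteq> {1..l*p}}"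
    using card_foulkes_basis[OF _ fixed_partition_split(1)[OF N P fixed a(2)]] by simp
  hence "a dvd l * p" by (metis dvd_triv_left)
  moreover have "coprime a p"
    using a prime_p by (metis coprime_commute dvd_imp_le not_le prime_imp_coprime)
  ultimately show ?thesis by (simp add: coprime_dvd_mult_left_iff)
qed

end

section \<open>The Brauer quotient as an outer tensor product\<close>

text \<open>Identifying the basis element \<open>P \<union> Q\<close> with \<open>P \<otimes> Q\<close>, \<open>slice B v Q\<close> is the
  coefficient of \<open>Q\<close> when \<open>v\<close> is written as a sum of tensors.\<close>

definition slice :: "nat set set set \<Rightarrow> (nat set set \<Rightarrow> 'a::field) \<Rightarrow> nat set set \<Rightarrow> nat set set \<Rightarrow> 'a"
  where "slice B v Q = (\<lambda>P. if P \<in> B then v (P \<union> Q) else 0)"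

definition slice_cosets :: "nat set set set \<Rightarrow> nat set set set \<Rightarrow> (nat set set \<Rightarrow> 'a::field) set
    \<Rightarrow> (nat set set \<Rightarrow> 'a) \<Rightarrow> nat set set \<Rightarrow> (nat set set \<Rightarrow> 'a) set" where
  "slice_cosets B1 B2 K v = (\<lambda>Q. if Q \<in> B2 then fcoset K (slice B1 v Q) else fcoset K (\<lambda>P. 0))"

lemma slice_linear:
  "slice B (\<lambda>P. v P + w P) Q = (\<lambda>P. slice B v Q P + slice B w Q P)"
  "slice B (\<lambda>P. c * v P) Q = (\<lambda>P. c * slice B v Q P)"
  "slice B (\<lambda>P. v P - w P) Q = (\<lambda>P. slice B v Q P - slice B w Q P)"
  unfolding slice_def by auto

lemma tensor_foulkes_simps:
  "mcar (tensor_foulkes M A b) =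
     {f. \<forall>P. (P \<in> foulkes_basis A b \<longrightarrow> f P \<in> mcar M) \<and> (P \<notin> foulkes_basis A b \<longrightarrow> f P = mzero M)}"
  "madd (tensor_foulkes M A b) f f' P =
     (if P \<in> foulkes_basis A b then madd M (f P) (f' P) else mzero M)"
  "msmult (tensor_foulkes M A b) c f P =
     (if P \<in> foulkes_basis A b then msmult M c (f P) else mzero M)"
  "mact (tensor_foulkes M A b) g f P =
     (if P \<in> foulkes_basis A b then mact M g (f (pimg (inv' g) P)) else mzero M)"
  by (simp_all add: tensor_foulkes_def Let_def)

context prime_cycle
begin

lemma pimg_Rgrp_complement:
  assumes "h \<in> R" "\<forall>X\<in>Q. X \<subseteq> {l*p<..N}"
  shows "pimg h Q = Q"
proof -
  have "h ` X = X" if "X \<in> Q" for X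
  proof -
    have "\<forall>x\<in>X. h x = x"
      using that assms(2) permutes_not_in[OF Rgrp_permutes[OF assms(1)]] by fastforce
    thus ?thesis by simp
  qed
  thus ?thesis unfolding pimg_def by simp
qed

lemma Rgrp_image_complement: "h \<in> R \<Longrightarrow> h ` {l*p<..N} = {l*p<..N}"
  using pimg_Rgrp_complement[of h "{{l*p<..N}}" N] unfolding pimg_def by simp

lemma pimg_Rgrp_blocks:
  assumes h: "h \<in> R"
  shows "{Y\<in>pimg h P. Y \<subseteq> {1..l*p}} = pimg h {X\<in>P. X \<subseteq> {1..l*p}}"
    "{Y\<in>pimg h P. Y \<subseteq> {l*p<..N}} = {X\<in>P. X \<subseteq> {l*p<..N}}"
    "(\<forall>Y\<in>pimg h P. Y \<subseteq> {1..l*p} \<or> Y \<subseteq> {l*p<..N}) \<longleftrightarrow> (\<forall>X\<in>P. X \<subseteq> {1..l*p} \<or> X \<subseteq> {l*p<..N})"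
proof -
  have inj: "inj h" using permutes_inj[OF Rgrp_permutes[OF h]] .
  note S = permutes_image[OF Rgrp_permutes[OF h]] and C = Rgrp_image_complement[OF h]
  show "{Y\<in>pimg h P. Y \<subseteq> {1..l*p}} = pimg h {X\<in>P. X \<subseteq> {1..l*p}}"
    using pimg_blocks_within[OF inj S] by simp
  show "{Y\<in>pimg h P. Y \<subseteq> {l*p<..N}} = {X\<in>P. X \<subseteq> {l*p<..N}}"
    using pimg_blocks_within[OF inj C] pimg_Rgrp_complement[OF h, of "{X\<in>P. X \<subseteq> {l*p<..N}}" N]
    by simp
  show "(\<forall>Y\<in>pimg h P. Y \<subseteq> {1..l*p} \<or> Y \<subseteq> {l*p<..N}) \<longleftrightarrow> (\<forall>X\<in>P. X \<subseteq> {1..l*p} \<or> X \<subseteq> {l*p<..N})"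
    using image_subset_invariant_iff[OF inj S] image_subset_invariant_iff[OF inj C]
    unfolding pimg_def by auto
qed

lemma normalizer_act_fixed_pts:
  assumes g: "g \<in> normalizer_S N R" and gA: "g ` A = A"
    and v: "v \<in> fixed_pts (foulkes A a) R"
  shows "(\<lambda>P. v (pimg (inv' g) P)) \<in> fixed_pts (foulkes A a) R"
proof -
  have gp: "g permutes {1..N}" using g unfolding normalizer_S_def by auto
  have "bij (inv' g)" "inv' g ` A = A"
    using permutes_bij[OF permutes_inv[OF gp]] image_inv_f_f[OF permutes_inj[OF gp], of A] gA by auto
  hence "(\<lambda>P. v (pimg (inv' g) P)) \<in> mcar (foulkes A a)"
    using v foulkes_basis_pimg_iff unfolding fixed_pts_Rgrp_iff mcar_foulkes by blast
  moreover have "v (pimg (inv' g) (pimg h P)) = v (pimg (inv' g) P)" if h: "h \<in> R" for h P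
  proof -
    have "inv' g \<circ> h = (inv' g \<circ> h \<circ> g) \<circ> inv' g"
      using permutes_inv_o(1)[OF gp] by (simp add: comp_assoc)
    hence "pimg (inv' g) (pimg h P) = pimg (inv' g \<circ> h \<circ> g) (pimg (inv' g) P)"
      by (metis pimg_comp)
    thus ?thesis using v normalizer_conj(2)[OF g h] unfolding fixed_pts_Rgrp_iff by simp
  qed
  ultimately show ?thesis unfolding fixed_pts_Rgrp_iff by blast
qed

lemma normalizer_act_fixed_vanishing:
  assumes g: "g \<in> normalizer_S N R" and gA: "g ` A = A"
    and v: "v \<in> fixed_vanishing A a R"
  shows "(\<lambda>P. v (pimg (inv' g) P)) \<in> fixed_vanishing A a R"
proof -
  have gp: "g permutes {1..N}" using g unfolding normalizer_S_def by auto
  have "fixed_partition R (pimg (inv' g) P)" if "fixed_partition R P" for P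
    unfolding fixed_partition_def
  proof
    fix h assume h: "h \<in> R"
    have "h \<circ> inv' g = inv' g \<circ> (g \<circ> h \<circ> inv' g)"
      using permutes_inv_o(2)[OF gp] by (simp add: comp_assoc[symmetric])
    hence "pimg h (pimg (inv' g) P) = pimg (inv' g) (pimg (g \<circ> h \<circ> inv' g) P)"
      by (metis pimg_comp)
    thus "pimg h (pimg (inv' g) P) = pimg (inv' g) P"
      using that normalizer_conj(1)[OF g h] unfolding fixed_partition_def by simp
  qed
  moreover have "(\<lambda>P. v (pimg (inv' g) P)) \<in> fixed_pts (foulkes A a) R"
    using v normalizer_act_fixed_pts[OF g gA] unfolding fixed_vanishing_def by blast
  ultimately show ?thesis using v unfolding fixed_vanishing_def by simp
qed

lemma slice_fixed_pts:
  assumes v: "v \<in> fixed_pts (foulkes {1..N} a) R" and Q: "\<forall>X\<in>Q. X \<subseteq> {l*p<..N}"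
  shows "slice (foulkes_basis {1..l*p} a) v Q \<in> fixed_pts (foulkes {1..l*p} a) R"
proof -
  have "slice (foulkes_basis {1..l*p} a) v Q (pimg h P) = slice (foulkes_basis {1..l*p} a) v Q P"
    if h: "h \<in> R" for h P
  proof -
    have "pimg h P \<union> Q = pimg h (P \<union> Q)" using pimg_Un pimg_Rgrp_complement[OF h Q] by metis
    thus ?thesis using v h foulkes_basis_pimg_permutes_iff[OF Rgrp_permutes[OF h]]
      unfolding slice_def fixed_pts_Rgrp_iff by simp
  qed
  thus ?thesis unfolding fixed_pts_Rgrp_iff mcar_foulkes slice_def by simp
qed

lemma fixed_vanishing_iff_slices:
  assumes N: "l*p \<le> N" and a: "a < p" and d: "d \<in> fixed_pts (foulkes {1..N} a) R"
  shows "d \<in> fixed_vanishing {1..N} a R \<longleftrightarrow>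
    (\<forall>Q\<in>foulkes_basis {l*p<..N} a. slice (foulkes_basis {1..l*p} a) d Q \<in> fixed_vanishing {1..l*p} a R)"
    (is "_ \<longleftrightarrow> (\<forall>Q\<in>?B2. slice ?B1 d Q \<in> _)")
proof
  assume "d \<in> fixed_vanishing {1..N} a R"
  hence d0: "d P = 0" if "fixed_partition R P" for P
    using that unfolding fixed_vanishing_def by blast
  show "\<forall>Q\<in>?B2. slice ?B1 d Q \<in> fixed_vanishing {1..l*p} a R"
  proof
    fix Q assume "Q \<in> ?B2"
    hence Q: "\<forall>X\<in>Q. X \<subseteq> {l*p<..N}" using foulkes_basis_block_subset by blast
    have "slice ?B1 d Q P = 0" if "fixed_partition R P" for P
    proof -
      have "fixed_partition R (P \<union> Q)"
        using that pimg_Rgrp_complement[OF _ Q] unfolding fixed_partition_def by (simp add: pimg_Un)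
      thus ?thesis unfolding slice_def using d0 by simp
    qed
    thus "slice ?B1 d Q \<in> fixed_vanishing {1..l*p} a R"
      unfolding fixed_vanishing_def using slice_fixed_pts[OF d Q] by blast
  qed
next
  assume slices: "\<forall>Q\<in>?B2. slice ?B1 d Q \<in> fixed_vanishing {1..l*p} a R"
  have "d P = 0" if fixed: "fixed_partition R P" for P
  proof (cases "P \<in> foulkes_basis {1..N} a")
    case False thus ?thesis using d unfolding fixed_pts_Rgrp_iff mcar_foulkes by blast
  next
    case True
    note split = fixed_partition_split[OF N True fixed a]
    let ?P1 = "{X\<in>P. X \<subseteq> {1..l*p}}" and ?P2 = "{X\<in>P. X \<subseteq> {l*p<..N}}"
    have "fixed_partition R ?P1" unfolding fixed_partition_def
    proof
      fix h assume h: "h \<in> R"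
      thus "pimg h ?P1 = ?P1"
        using fixed pimg_Rgrp_blocks(1)[OF h, of P] unfolding fixed_partition_def by simp
    qed
    hence "slice ?B1 d ?P2 ?P1 = 0" using slices split(2) unfolding fixed_vanishing_def by blast
    thus ?thesis using split(1) split(3)[symmetric] unfolding slice_def by simp
  qed
  thus "d \<in> fixed_vanishing {1..N} a R" unfolding fixed_vanishing_def using d by blast
qed

lemma fixed_pts_of_slices:
  assumes N: "l*p \<le> N"
    and u: "\<And>Q. Q \<in> foulkes_basis {l*p<..N} a \<Longrightarrow> u Q \<in> fixed_pts (foulkes {1..l*p} a) R"
  obtains v where "v \<in> fixed_pts (foulkes {1..N} a) R"
    "\<And>Q. Q \<in> foulkes_basis {l*p<..N} a \<Longrightarrow> slice (foulkes_basis {1..l*p} a) v Q = u Q"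
proof -
  let ?S = "{1..l*p}" and ?C = "{l*p<..N}"
  have split: "{1..N} = ?S \<union> ?C" "?S \<inter> ?C = {}" using N by auto
  define good where "good P \<longleftrightarrow> P \<in> foulkes_basis {1..N} a \<and> (\<forall>X\<in>P. X \<subseteq> ?S \<or> X \<subseteq> ?C)" for P
  define v where "v P = (if good P then u {X\<in>P. X \<subseteq> ?C} {X\<in>P. X \<subseteq> ?S} else 0)" for P
  have "v (pimg h P) = v P" if h: "h \<in> R" for h P
  proof -
    have good: "good (pimg h P) \<longleftrightarrow> good P"
      unfolding good_def using pimg_Rgrp_blocks(3)[OF h]
        foulkes_basis_pimg_permutes_iff[OF Rgrp_permutes_interval[OF N h]] by simp
    show ?thesis
    proof (cases "good P")
      case True
      hence "{X\<in>P. X \<subseteq> ?C} \<in> foulkes_basis ?C a"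
        using foulkes_basis_split(2)[of P ?S ?C a] split unfolding good_def by auto
      thus ?thesis
        using True good u h pimg_Rgrp_blocks(1,2)[OF h] unfolding v_def fixed_pts_Rgrp_iff by simp
    qed (simp add: v_def good)
  qed
  moreover have "v \<in> mcar (foulkes {1..N} a)" unfolding mcar_foulkes v_def good_def by simp
  ultimately have "v \<in> fixed_pts (foulkes {1..N} a) R" unfolding fixed_pts_Rgrp_iff by blast
  moreover have "slice (foulkes_basis ?S a) v Q P = u Q P" if Q: "Q \<in> foulkes_basis ?C a" for Q P
  proof (cases "P \<in> foulkes_basis ?S a")
    case False
    thus ?thesis using u[OF Q] unfolding slice_def fixed_pts_Rgrp_iff mcar_foulkes by simp
  next
    case True
    note PQ = foulkes_basis_Un[OF True Q split(2)]
    have "\<forall>X\<in>P \<union> Q. X \<subseteq> ?S \<or> X \<subseteq> ?C"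
      using foulkes_basis_block_subset[OF True] foulkes_basis_block_subset[OF Q] by blast
    hence "good (P \<union> Q)" using PQ(1) split(1) unfolding good_def by simp
    thus ?thesis using True PQ(2,3) unfolding slice_def v_def by simp
  qed
  ultimately show ?thesis using that by blast
qed

lemma slice_cosets_surj:
  fixes f :: "nat set set \<Rightarrow> (nat set set \<Rightarrow> 'a::field) set"
  assumes N: "l*p \<le> N"
    and f: "f \<in> mcar (tensor_foulkes (quot_foulkes {1..l*p} a (fixed_pts (foulkes {1..l*p} a) R)
      (fixed_vanishing {1..l*p} a R)) {l*p<..N} a)"
  obtains v where "v \<in> fixed_pts (foulkes {1..N} a) R"
    "slice_cosets (foulkes_basis {1..l*p} a) (foulkes_basis {l*p<..N} a) (fixed_vanishing {1..l*p} a R) v = f"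
proof -
  let ?Fs = "fixed_pts (foulkes {1..l*p} a :: (nat set set \<Rightarrow> 'a, 'a) fmod) R"
  let ?Ks = "fixed_vanishing {1..l*p} a R :: (nat set set \<Rightarrow> 'a) set"
  let ?B2 = "foulkes_basis {l*p<..N} a"
  have "\<exists>u. u \<in> ?Fs \<and> f Q = fcoset ?Ks u" if "Q \<in> ?B2" for Q
    using f that unfolding tensor_foulkes_simps quot_foulkes_simps by auto
  then obtain u where u: "u Q \<in> ?Fs" "f Q = fcoset ?Ks (u Q)" if "Q \<in> ?B2" for Q
    by metis
  have fN: "f Q = fcoset ?Ks (\<lambda>P. 0)" if "Q \<notin> ?B2" for Q
    using f that unfolding tensor_foulkes_simps quot_foulkes_simps by auto
  obtain v where v: "v \<in> fixed_pts (foulkes {1..N} a) R"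
    "\<And>Q. Q \<in> ?B2 \<Longrightarrow> slice (foulkes_basis {1..l*p} a) v Q = u Q"
    using fixed_pts_of_slices[where u=u, OF N] u(1) by blast
  have "slice_cosets (foulkes_basis {1..l*p} a) ?B2 ?Ks v Q = f Q" for Q
    using v(2) u(2) fN unfolding slice_cosets_def by (cases "Q \<in> ?B2") simp_all
  thus ?thesis using that v(1) by blast
qed

lemma slice_cosets_act:
  assumes g: "g \<in> normalizer_S N R"
  shows "slice_cosets (foulkes_basis {1..l*p} a) (foulkes_basis {l*p<..N} a) (fixed_vanishing {1..l*p} a R)
      (\<lambda>P. v (pimg (inv' g) P))
    = mact (tensor_foulkes (quot_foulkes {1..l*p} a (fixed_pts (foulkes {1..l*p} a) R)
        (fixed_vanishing {1..l*p} a R)) {l*p<..N} a) g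
      (slice_cosets (foulkes_basis {1..l*p} a) (foulkes_basis {l*p<..N} a) (fixed_vanishing {1..l*p} a R) v)"
    (is "?F (\<lambda>P. v (pimg (inv' g) P)) = mact ?T g (?F v)")
proof
  let ?B1 = "foulkes_basis {1..l*p} a" and ?B2 = "foulkes_basis {l*p<..N} a"
  let ?Ks = "fixed_vanishing {1..l*p} a R :: (nat set set \<Rightarrow> 'a) set"
  fix Q
  have gp: "g permutes {1..N}" using g unfolding normalizer_S_def by auto
  have bij: "bij (inv' g)" using permutes_bij[OF permutes_inv[OF gp]] .
  have inv_image: "inv' g ` A = A" if "g ` A = A" for A
    using image_inv_f_f[OF permutes_inj[OF gp], of A] that by simp
  note basis_S = foulkes_basis_pimg_iff[OF bij inv_image[OF normalizer_image_support[OF g]]]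
  note basis_C = foulkes_basis_pimg_iff[OF bij inv_image[OF normalizer_image_complement[OF g]]]
  show "?F (\<lambda>P. v (pimg (inv' g) P)) Q = mact ?T g (?F v) Q"
  proof (cases "Q \<in> ?B2")
    case True
    have "slice ?B1 (\<lambda>P. v (pimg (inv' g) P)) Q
        = (\<lambda>P. slice ?B1 v (pimg (inv' g) Q) (pimg (inv' g) P))"
      unfolding slice_def using basis_S by (auto simp: pimg_Un)
    moreover have "\<forall>k\<in>?Ks. (\<lambda>P. k (pimg (inv' g) P)) \<in> ?Ks"
      using normalizer_act_fixed_vanishing[OF g normalizer_image_support[OF g]] by blast
    note act = quot_foulkes_act[OF fun_subspace_fixed_vanishing this, of "{1..l*p}" a]
    ultimately show ?thesis
      using True basis_C unfolding tensor_foulkes_simps slice_cosets_def by (simp add: act)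
  qed (simp add: tensor_foulkes_simps slice_cosets_def quot_foulkes_simps)
qed

lemma slice_cosets_eq_iff:
  assumes N: "l*p \<le> N" and a: "a < p"
    and v: "v \<in> fixed_pts (foulkes {1..N} a) R" and w: "w \<in> fixed_pts (foulkes {1..N} a) R"
  shows "slice_cosets (foulkes_basis {1..l*p} a) (foulkes_basis {l*p<..N} a) (fixed_vanishing {1..l*p} a R) v
      = slice_cosets (foulkes_basis {1..l*p} a) (foulkes_basis {l*p<..N} a) (fixed_vanishing {1..l*p} a R) w
    \<longleftrightarrow> (\<lambda>P. v P - w P) \<in> fixed_vanishing {1..N} a R"
    (is "?F v = ?F w \<longleftrightarrow> _")
proof -
  let ?Ks = "fixed_vanishing {1..l*p} a R :: (nat set set \<Rightarrow> 'a) set"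
  let ?B1 = "foulkes_basis {1..l*p} a" and ?B2 = "foulkes_basis {l*p<..N} a"
  have "?F v = ?F w \<longleftrightarrow> (\<forall>Q\<in>?B2. fcoset ?Ks (slice ?B1 v Q) = fcoset ?Ks (slice ?B1 w Q))"
    unfolding slice_cosets_def fun_eq_iff by (auto split: if_splits)
  also have "\<dots> \<longleftrightarrow> (\<forall>Q\<in>?B2. slice ?B1 (\<lambda>P. v P - w P) Q \<in> ?Ks)"
    unfolding slice_linear fcoset_eq_iff[OF fun_subspace_fixed_vanishing] ..
  also have "\<dots> \<longleftrightarrow> (\<lambda>P. v P - w P) \<in> fixed_vanishing {1..N} a R"
    using fixed_vanishing_iff_slices[OF N a fun_subspace_diff[OF fun_subspace_fixed_pts v w]] by simp
  finally show ?thesis .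
qed

theorem brauer_quot_foulkes_iso:
  assumes char: "CHAR('a::field) = p" and N: "l*p \<le> N" and a: "a < p"
  shows "mod_iso (normalizer_S N R)
     (brauer_quot N (foulkes {1..N} a :: (nat set set \<Rightarrow> 'a, 'a) fmod) R)
     (tensor_foulkes (brauer_quot (l*p) (foulkes {1..l*p} a :: (nat set set \<Rightarrow> 'a, 'a) fmod) R)
        {l*p<..N} a)"
proof -
  let ?Fq = "fixed_pts (foulkes {1..N} a :: (nat set set \<Rightarrow> 'a, 'a) fmod) R"
  let ?Ks = "fixed_vanishing {1..l*p} a R :: (nat set set \<Rightarrow> 'a) set"
  let ?B1 = "foulkes_basis {1..l*p} a" and ?B2 = "foulkes_basis {l*p<..N} a"
  let ?T = "tensor_foulkes (quot_foulkes {1..l*p} a (fixed_pts (foulkes {1..l*p} a) R) ?Ks) {l*p<..N} a"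
  let ?F = "slice_cosets ?B1 ?B2 ?Ks"
  have blocks: "\<forall>X\<in>Q. X \<subseteq> {l*p<..N}" if "Q \<in> ?B2" for Q
    using that foulkes_basis_block_subset by blast
  have "mod_iso (normalizer_S N R) (quot_foulkes {1..N} a ?Fq (fixed_vanishing {1..N} a R)) ?T"
  proof (rule quot_foulkes_iso[OF fun_subspace_fixed_vanishing fun_subspace_fixed_pts
        fixed_vanishing_subset, where F = ?F])
    show "?F (\<lambda>P. v P + w P) = madd ?T (?F v) (?F w)" for v w
      by (rule ext) (simp add: tensor_foulkes_simps slice_cosets_def slice_linear
          quot_foulkes_add[OF fun_subspace_fixed_vanishing] quot_foulkes_simps(2))
    show "?F (\<lambda>P. c * v P) = msmult ?T c (?F v)" for v c
      by (rule ext) (simp add: tensor_foulkes_simps slice_cosets_def slice_linear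
          quot_foulkes_smult[OF fun_subspace_fixed_vanishing] quot_foulkes_simps(2))
    show "(\<lambda>P. v (pimg (inv' g) P)) \<in> ?Fq" if "g \<in> normalizer_S N R" "v \<in> ?Fq" for g v
      using normalizer_act_fixed_pts[OF that(1) _ that(2)] that(1)
      unfolding normalizer_S_def by (auto simp: permutes_image)
    show "?F (\<lambda>P. v (pimg (inv' g) P)) = mact ?T g (?F v)" if "g \<in> normalizer_S N R" for g v
      using slice_cosets_act[OF that] .
    show "?F ` ?Fq = mcar ?T"
    proof
      show "?F ` ?Fq \<subseteq> mcar ?T"
        using slice_fixed_pts[OF _ blocks]
        unfolding tensor_foulkes_simps quot_foulkes_simps slice_cosets_def by (auto intro!: imageI)
      show "mcar ?T \<subseteq> ?F ` ?Fq"
        by (blast elim: slice_cosets_surj[OF N])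
    qed
    show "?F v = ?F w \<longleftrightarrow> (\<lambda>P. v P - w P) \<in> fixed_vanishing {1..N} a R"
      if "v \<in> ?Fq" "w \<in> ?Fq" for v w
      using slice_cosets_eq_iff[OF N a that] .
  qed
  thus ?thesis using brauer_quot_foulkes[OF char] N by simp
qed

theorem brauer_quot_foulkes_zero:
  assumes char: "CHAR('a::field) = p" and N: "l*p \<le> N" and a: "0 < a" "a < p" "\<not> a dvd l"
  shows "zero_module (brauer_quot N (foulkes {1..N} a :: (nat set set \<Rightarrow> 'a, 'a) fmod) R)"
proof -
  have "v \<in> fixed_vanishing {1..N} a R" if v: "v \<in> fixed_pts (foulkes {1..N} a) R" for v :: "nat set set \<Rightarrow> 'a"
  proof -
    have "\<not> fixed_partition R P" if "P \<in> foulkes_basis {1..N} a" for P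
      using dvd_of_fixed_partition[OF N that _ a(1,2)] a(3) by blast
    thus ?thesis using v unfolding fixed_vanishing_def fixed_pts_Rgrp_iff mcar_foulkes by blast
  qed
  hence "fixed_pts (foulkes {1..N} a) R = (fixed_vanishing {1..N} a R :: (nat set set \<Rightarrow> 'a) set)"
    using fixed_vanishing_subset by blast
  thus ?thesis
    using brauer_quot_foulkes[OF char N] quot_foulkes_self_zero[OF fun_subspace_fixed_vanishing] by simp
qed

end

theorem lemma3p1:
  fixes p a n l :: nat
  assumes "Factorial_Ring.prime p" and "odd p" and "CHAR('a::field) = p"
    and "a < p" and "p \<le> n" and "1 \<le> l" and "l * p \<le> a * n"
  shows "(\<forall>s. l = a * s \<longrightarrow>
           normalizer_S (a*n) (Rgrp p l)
             = {g1 \<circ> g2 | g1 g2. g1 \<in> normalizer_S (a*s*p) (Rgrp p l) \<and> g2 permutes {a*s*p<..a*n}}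
         \<and> mod_iso (normalizer_S (a*n) (Rgrp p l))
             (brauer_quot (a*n) (H a n :: (nat set set \<Rightarrow> 'a, 'a) fmod) (Rgrp p l))
             (tensor_foulkes (brauer_quot (a*s*p) (H a (s*p) :: (nat set set \<Rightarrow> 'a, 'a) fmod) (Rgrp p l))
                {a*s*p<..a*n} a))
       \<and> (\<not> a dvd l \<longrightarrow>
           zero_module (brauer_quot (a*n) (H a n :: (nat set set \<Rightarrow> 'a, 'a) fmod) (Rgrp p l)))"
proof -
  interpret prime_cycle p l using assms(1,6) by unfold_locales
  note char = assms(3) and a_lt_p = assms(4) and N = assms(7)
  show ?thesis
  proof (intro conjI allI impI)
    fix s assume "l = a * s"
    hence ls: "a*s*p = l*p" "a*(s*p) = l*p" by simp_all
    show "normalizer_S (a*n) R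
        = {g1 \<circ> g2 | g1 g2. g1 \<in> normalizer_S (a*s*p) R \<and> g2 permutes {a*s*p<..a*n}}"
      unfolding ls(1) by (rule normalizer_decompose[OF N])
    show "mod_iso (normalizer_S (a*n) R)
        (brauer_quot (a*n) (H a n :: (nat set set \<Rightarrow> 'a, 'a) fmod) R)
        (tensor_foulkes (brauer_quot (a*s*p) (H a (s*p) :: (nat set set \<Rightarrow> 'a, 'a) fmod) R)
          {a*s*p<..a*n} a)"
      unfolding ls by (rule brauer_quot_foulkes_iso[OF char N a_lt_p])
  next
    assume "\<not> a dvd l"
    moreover have "0 < a" using N l_pos p_gt_1 by (cases a) auto
    ultimately show "zero_module (brauer_quot (a*n) (H a n :: (nat set set \<Rightarrow> 'a, 'a) fmod) R)"
      using brauer_quot_foulkes_zero[OF char N _ a_lt_p] by simp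
  qed
qed

end
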